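(* Let $G$ be a simple graph on vertex set $\{1,\ldots,n\}$ and $k\ge 1$ an integer such that $G$ has a non-empty $k$-core, and let $V_{k\text{-core}}$ denote the vertex set of the $k$-core of $G$. Let $\mathbf{x}^{(k)}=(x^{(k)}_1,\ldots,x^{(k)}_n)^{\mathrm T}$ be a Perron eigenvector of $\mathcal{A}^{(k)}(G)$, i.e. a nonzero entrywise nonnegative eigenvector of $\mathcal{A}^{(k)}(G)$ corresponding to the eigenvalue $\rho_k(G)$. Then $\operatorname{supp}(\mathbf{x}^{(k)})\subseteq V_{k\text{-core}}$. Moreover, if the subgraph of $G$ induced by $V_{k\text{-core}}$ is connected, then $\operatorname{supp}(\mathbf{x}^{(k)})=V_{k\text{-core}}$.
   Context: All graphs are finite, simple and undirected. The $k$-core of a graph $G$ is the maximal subgraph of $G$ in which every vertex has degree at least $k$ within the subgraph. For a tensor $\mathcal{A}=(a_{i_1 i_2\cdots i_m})$ of order $m$ and dimension $n$ and $\mathbf{x}\in\mathbb{C}^n$, $\mathcal{A}\mathbf{x}^{m-1}\in\mathbb{C}^n$ has $i$-th component $\sum_{i_2,\ldots,i_m=1}^n a_{i i_2\cdots i_m}x_{i_2}\cdots x_{i_m}$. A complex number $\lambda$ is an eigenvalue of $\mathcal{A}$ if there is a nonzero $\mathbf{x}\in\mathbb{C}^n$ with $\mathcal{A}\mathbf{x}^{m-1}=\lambda\mathbf{x}^{[m-1]}$, where $\mathbf{x}^{[m-1]}=(x_1^{m-1},\ldots,x_n^{m-1})^{\mathrm T}$; $\mathbf{x}$ is then an eigenvector.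 The spectral radius $\rho(\mathcal{A})$ is the largest modulus of the eigenvalues of $\mathcal{A}$. For a graph $G$ on vertex set $\{1,\ldots,n\}$ with neighborhoods $N_G(i)$, the $k$-adjacency tensor $\mathcal{A}^{(k)}(G)=(a_{i_1 i_2\cdots i_{k+1}})$ is the order-$(k+1)$, dimension-$n$ tensor with $a_{i_1 i_2\cdots i_{k+1}}=1/k!$ if $i_1,\ldots,i_{k+1}$ are pairwise distinct and $\{i_2,\ldots,i_{k+1}\}\subseteq N_G(i_1)$, and $0$ otherwise. Equivalently, $(\mathcal{A}^{(k)}(G)\mathbf{x}^k)_i=\sum_{T\subseteq N_G(i),\,|T|=k}\prod_{j\in T}x_j$. Define $\rho_k(G)=\rho(\mathcal{A}^{(k)}(G))$. The support of $\mathbf{x}$ is $\operatorname{supp}(\mathbf{x})=\{i: x_i\neq 0\}$. *)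

theory Defs
  imports Complex_Main
begin

definition simple_graph :: "nat \<Rightarrow> (nat \<Rightarrow> nat \<Rightarrow> bool) \<Rightarrow> bool" where
  "simple_graph n E \<longleftrightarrow> (\<forall>i j. E i j \<longrightarrow> E j i) \<and> (\<forall>i. \<not> E i i)
     \<and> (\<forall>i j. E i j \<longrightarrow> i \<in> {1..n} \<and> j \<in> {1..n})"

definition nbhd :: "nat \<Rightarrow> (nat \<Rightarrow> nat \<Rightarrow> bool) \<Rightarrow> nat \<Rightarrow> nat set" where
  "nbhd n E i = {j \<in> {1..n}. E i j}"

text \<open>Vertex set of the k-core: the vertex set of the maximal subgraph in which every
  vertex has degree at least k, i.e. the union of all vertex sets W whose induced
  subgraph has minimum degree at least k.\<close>

definition min_deg_ge :: "nat \<Rightarrow> (nat \<Rightarrow> nat \<Rightarrow> bool) \<Rightarrow> nat \<Rightarrow> nat set \<Rightarrow> bool" where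
  "min_deg_ge n E k W \<longleftrightarrow> W \<subseteq> {1..n} \<and> (\<forall>v\<in>W. card (nbhd n E v \<inter> W) \<ge> k)"

definition k_core_vertices :: "nat \<Rightarrow> (nat \<Rightarrow> nat \<Rightarrow> bool) \<Rightarrow> nat \<Rightarrow> nat set" where
  "k_core_vertices n E k = \<Union> {W. min_deg_ge n E k W}"

definition induced_connected :: "(nat \<Rightarrow> nat \<Rightarrow> bool) \<Rightarrow> nat set \<Rightarrow> bool" where
  "induced_connected E S \<longleftrightarrow>
     (\<forall>u\<in>S. \<forall>v\<in>S. (\<lambda>a b. a \<in> S \<and> b \<in> S \<and> E a b)\<^sup>*\<^sup>* u v)"

text \<open>(A^(k)(G) x^k)_i = sum over k-subsets T of N(i) of prod_{j in T} x_j.\<close>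
definition kadj_apply ::
  "nat \<Rightarrow> (nat \<Rightarrow> nat \<Rightarrow> bool) \<Rightarrow> nat \<Rightarrow> (nat \<Rightarrow> complex) \<Rightarrow> nat \<Rightarrow> complex" where
  "kadj_apply n E k x i = (\<Sum>T \<in> {T. T \<subseteq> nbhd n E i \<and> card T = k}. \<Prod>j\<in>T. x j)"

text \<open>Eigenpair of the order-(k+1), dimension-n tensor A^(k)(G): A x^k = lambda x^[k],
  x nonzero in C^n (vectors are functions on nat, only components 1..n matter).\<close>
definition kadj_eigenpair ::
  "nat \<Rightarrow> (nat \<Rightarrow> nat \<Rightarrow> bool) \<Rightarrow> nat \<Rightarrow> complex \<Rightarrow> (nat \<Rightarrow> complex) \<Rightarrow> bool" where
  "kadj_eigenpair n E k lam x \<longleftrightarrow> (\<exists>i\<in>{1..n}. x i \<noteq> 0) \<and>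
     (\<forall>i\<in>{1..n}. kadj_apply n E k x i = lam * x i ^ k)"

definition kadj_eigenvalue :: "nat \<Rightarrow> (nat \<Rightarrow> nat \<Rightarrow> bool) \<Rightarrow> nat \<Rightarrow> complex \<Rightarrow> bool" where
  "kadj_eigenvalue n E k lam \<longleftrightarrow> (\<exists>x. kadj_eigenpair n E k lam x)"

definition rho_k :: "nat \<Rightarrow> (nat \<Rightarrow> nat \<Rightarrow> bool) \<Rightarrow> nat \<Rightarrow> real" where
  "rho_k n E k = Sup {cmod lam | lam. kadj_eigenvalue n E k lam}"

definition supp :: "nat \<Rightarrow> (nat \<Rightarrow> 'a::zero) \<Rightarrow> nat set" where
  "supp n x = {i \<in> {1..n}. x i \<noteq> 0}"

end

(*
  For a connected vertex set D in which every vertex has at least k neighbours, the largest t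
  admitting some y >= 0 supported on D with t y_i^k <= (A y^k)_i on D (the Collatz-Wielandt
  number) is attained by compactness. A maximiser can be made positive on D by adding terms
  eps^(e v) that decay fast with the distance from its support, and among positive maximisers
  one with the most strict inequalities has none: raising one coordinate at an edge leaving the
  strict set would create another. This gives a positive eigenvector on D, which extends by zero
  to an eigenvector of A^(k)(G) when no vertex outside D has k neighbours in D, as is the case
  for the k-core and for its components. Hence rho_k(G) >= 1.

  Since rho_k(G) > 0, every vertex in the support of a nonnegative eigenvector x for rho_k(G)
  has k neighbours inside the support, so the support lies in the k-core. If the k-core C is
  connected, let u be the positive eigenvector on C, with eigenvalue mu <= rho_k(G), and c u the
  least multiple of u above x: at a contact point rho_k(G) <= mu, and strict monotonicity of
  (A y^k)_i spreads the contact x = c u along the edges of C, so x > 0 on C.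
*)

theory Submission
  imports Defs "HOL-Analysis.Analysis"
begin

section \<open>Elementary symmetric sums\<close>

definition elem_sym :: "nat \<Rightarrow> 'a set \<Rightarrow> ('a \<Rightarrow> 'b::comm_semiring_1) \<Rightarrow> 'b" where
  "elem_sym k N y = (\<Sum>T | T \<subseteq> N \<and> card T = k. \<Prod>j\<in>T. y j)"

lemma elem_sym_of_real:
  "elem_sym k N (\<lambda>j. of_real (y j)) = (of_real (elem_sym k N y) :: 'b::real_field)"
  by (simp add: elem_sym_def)

lemma elem_sym_scale:
  assumes "finite N"
  shows "elem_sym k N (\<lambda>j. c * y j) = c ^ k * elem_sym k N y"
  unfolding elem_sym_def sum_distrib_left
  by (intro sum.cong refl) (auto simp: prod.distrib dest: finite_subset[OF _ assms])

lemma elem_sym_eq_0: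
  assumes "finite N" "card (N \<inter> D) < k" "\<And>j. j \<in> N - D \<Longrightarrow> y j = 0"
  shows "elem_sym k N y = 0"
  unfolding elem_sym_def
proof (intro sum.neutral ballI)
  fix T assume T: "T \<in> {T. T \<subseteq> N \<and> card T = k}"
  have "\<not> T \<subseteq> N \<inter> D"
    using T assms(1,2) card_mono[of "N \<inter> D" T] by auto
  then obtain j where "j \<in> T" "j \<in> N - D"
    using T by auto
  moreover have "finite T"
    using T assms(1) finite_subset by blast
  ultimately show "(\<Prod>j\<in>T. y j) = 0"
    using assms(3) by (intro prod_zero) auto
qed

lemma elem_sym_nonzero_imp_subset:
  assumes "finite N" "elem_sym k N y \<noteq> 0"
  shows "\<exists>T. T \<subseteq> N \<and> card T = k \<and> (\<forall>j\<in>T. y j \<noteq> 0)"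
proof -
  have "\<exists>T\<in>{T. T \<subseteq> N \<and> card T = k}. (\<Prod>j\<in>T. y j) \<noteq> 0"
  proof (rule ccontr)
    assume "\<not> ?thesis"
    then have "elem_sym k N y = 0"
      unfolding elem_sym_def by (intro sum.neutral) blast
    with assms(2) show False ..
  qed
  then obtain T where T: "T \<subseteq> N" "card T = k" "(\<Prod>j\<in>T. y j) \<noteq> 0"
    by blast
  moreover have "finite T"
    using T(1) assms(1) finite_subset by blast
  ultimately show ?thesis
    using prod_zero by blast
qed

lemma prod_le_elem_sym:
  fixes y :: "'a \<Rightarrow> 'b::linordered_semidom"
  assumes "finite N" "T \<subseteq> N" "card T = k" "\<And>j. j \<in> N \<Longrightarrow> 0 \<le> y j"
  shows "(\<Prod>j\<in>T. y j) \<le> elem_sym k N y"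
  unfolding elem_sym_def
  using assms by (intro member_le_sum) (auto intro!: prod_nonneg)

lemma elem_sym_mono:
  fixes y z :: "'a \<Rightarrow> 'b::linordered_semidom"
  assumes "\<And>j. j \<in> N \<Longrightarrow> 0 \<le> y j" "\<And>j. j \<in> N \<Longrightarrow> y j \<le> z j"
  shows "elem_sym k N y \<le> elem_sym k N z"
  unfolding elem_sym_def using assms by (intro sum_mono prod_mono) auto

lemma power_sum_le_elem_sym:
  fixes z :: "'a \<Rightarrow> 'b::linordered_semidom"
  assumes "finite N" "T \<subseteq> N" "card T = k" "\<And>j. j \<in> N \<Longrightarrow> 0 \<le> z j"
    and "\<And>j. j \<in> T \<Longrightarrow> c * \<epsilon> ^ e j \<le> z j" "0 \<le> c" "0 \<le> \<epsilon>"
  shows "c ^ k * \<epsilon> ^ sum e T \<le> elem_sym k N z"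
proof -
  have "finite T"
    using assms(1,2) finite_subset by blast
  then have "c ^ k * \<epsilon> ^ sum e T = (\<Prod>j\<in>T. c * \<epsilon> ^ e j)"
    using assms(3) by (simp add: prod.distrib power_sum)
  also have "\<dots> \<le> (\<Prod>j\<in>T. z j)"
    using assms(5-7) by (intro prod_mono) auto
  also have "\<dots> \<le> elem_sym k N z"
    using assms(1-4) by (rule prod_le_elem_sym)
  finally show ?thesis .
qed

lemma prod_strict_mono_one:
  fixes y z :: "'a \<Rightarrow> 'b::linordered_semidom"
  assumes "finite T" "\<And>j. j \<in> T \<Longrightarrow> 0 \<le> y j" "\<And>j. j \<in> T \<Longrightarrow> y j \<le> z j"
    "\<And>j. j \<in> T \<Longrightarrow> 0 < z j" "u \<in> T" "y u < z u"
  shows "(\<Prod>j\<in>T. y j) < (\<Prod>j\<in>T. z j)"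
proof -
  have "(\<Prod>j\<in>T. y j) = y u * (\<Prod>j\<in>T - {u}. y j)"
    using assms(1,5) by (simp add: prod.remove)
  also have "\<dots> \<le> y u * (\<Prod>j\<in>T - {u}. z j)"
    using assms by (intro mult_left_mono prod_mono) auto
  also have "\<dots> < z u * (\<Prod>j\<in>T - {u}. z j)"
    using assms by (intro mult_strict_right_mono prod_pos) auto
  also have "\<dots> = (\<Prod>j\<in>T. z j)"
    using assms(1,5) by (simp add: prod.remove)
  finally show ?thesis .
qed

lemma elem_sym_strict_mono:
  fixes y z :: "'a \<Rightarrow> 'b::linordered_semidom"
  assumes "finite N" "\<And>j. j \<in> N \<Longrightarrow> 0 \<le> y j" "\<And>j. j \<in> N \<Longrightarrow> y j \<le> z j"
    and "T \<subseteq> N" "card T = k" "\<And>j. j \<in> T \<Longrightarrow> 0 < z j" "u \<in> T" "y u < z u"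
  shows "elem_sym k N y < elem_sym k N z"
  unfolding elem_sym_def
proof (rule sum_strict_mono_ex1)
  show "finite {T. T \<subseteq> N \<and> card T = k}"
    using assms(1) by simp
  show "\<forall>S\<in>{T. T \<subseteq> N \<and> card T = k}. (\<Prod>j\<in>S. y j) \<le> (\<Prod>j\<in>S. z j)"
    using assms(2,3) by (auto intro!: prod_mono)
  show "\<exists>S\<in>{T. T \<subseteq> N \<and> card T = k}. (\<Prod>j\<in>S. y j) < (\<Prod>j\<in>S. z j)"
    using assms by (intro bexI[of _ T] prod_strict_mono_one) (auto dest: finite_subset)
qed

lemma norm_elem_sym_le:
  fixes y :: "'a \<Rightarrow> 'b::real_normed_field"
  assumes "finite N" "\<And>j. j \<in> N \<Longrightarrow> norm (y j) \<le> M"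
  shows "norm (elem_sym k N y) \<le> real (card N choose k) * M ^ k"
proof -
  have "norm (elem_sym k N y) \<le> (\<Sum>T | T \<subseteq> N \<and> card T = k. \<Prod>j\<in>T. norm (y j))"
    unfolding elem_sym_def by (rule order_trans[OF norm_sum]) (simp add: prod_norm)
  also have "\<dots> \<le> (\<Sum>T | T \<subseteq> N \<and> card T = k. M ^ k)"
  proof (intro sum_mono)
    fix T assume "T \<in> {T. T \<subseteq> N \<and> card T = k}"
    then show "(\<Prod>j\<in>T. norm (y j)) \<le> M ^ k"
      using assms(2) prod_mono[of T "\<lambda>j. norm (y j)" "\<lambda>_. M"] by auto
  qed
  also have "\<dots> = real (card N choose k) * M ^ k"
    using n_subsets[OF assms(1)] by simp
  finally show ?thesis .
qed

lemma continuous_on_elem_sym: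
  fixes f :: "'c::topological_space \<Rightarrow> 'a \<Rightarrow> 'b::real_normed_field"
  assumes "\<And>j. continuous_on S (\<lambda>x. f x j)"
  shows "continuous_on S (\<lambda>x. elem_sym k N (f x))"
  unfolding elem_sym_def by (intro continuous_intros assms)

lemma ex_subset_with_card_containing:
  assumes "finite A" "u \<in> A" "1 \<le> k" "k \<le> card A"
  shows "\<exists>T\<subseteq>A. card T = k \<and> u \<in> T"
proof -
  have "k - 1 \<le> card (A - {u})"
    using assms by simp
  then obtain T where T: "T \<subseteq> A - {u}" "card T = k - 1"
    by (meson obtain_subset_with_card_n)
  then have "finite T" "u \<notin> T"
    using assms(1) finite_subset by auto
  with T assms(2,3) have "insert u T \<subseteq> A" "card (insert u T) = k"
    by auto
  then show ?thesis
    by blast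
qed

lemma finite_ex_lower_bound_pos:
  fixes y :: "'a \<Rightarrow> real"
  assumes "finite S" "\<forall>j\<in>S. 0 < y j"
  shows "\<exists>c>0. c \<le> 1 \<and> (\<forall>j\<in>S. c \<le> y j)"
proof (intro exI conjI)
  let ?c = "Min (insert 1 (y ` S))"
  show "0 < ?c"
    using assms by (subst Min_gr_iff) auto
  show "?c \<le> 1" "\<forall>j\<in>S. ?c \<le> y j"
    using assms(1) by simp_all
qed

lemma compact_PiE_atLeastAtMost:
  fixes a b :: "'i \<Rightarrow> real"
  shows "compact (Pi\<^sub>E UNIV (\<lambda>j. {a j..b j}))"
proof -
  have "compactin (product_topology (\<lambda>_. euclidean) UNIV) (Pi\<^sub>E UNIV (\<lambda>j. {a j..b j}))"
    by (simp add: compactin_PiE)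
  then show ?thesis
    by (simp add: euclidean_product_topology)
qed

lemma ex_increment_power_less:
  fixes t x s :: real
  assumes "t * x ^ k < s"
  shows "\<exists>\<delta>>0. t * (x + \<delta>) ^ k < s"
proof -
  have "((\<lambda>\<delta>. t * (x + \<delta>) ^ k) \<longlongrightarrow> t * x ^ k) (at_right 0)"
    by (intro tendsto_eq_intros) auto
  then have "\<forall>\<^sub>F \<delta> in at_right 0. t * (x + \<delta>) ^ k < s"
    using assms by (simp add: order_tendstoD(2))
  then show ?thesis
    unfolding eventually_at_right_field by (metis field_lbound_gt_zero less_add_same_cancel1)
qed

section \<open>Eigenpairs of the k-adjacency tensor\<close>

lemma kadj_apply_eq_elem_sym: "kadj_apply n E k x i = elem_sym k (nbhd n E i) x"
  by (simp add: kadj_apply_def elem_sym_def)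

lemma kadj_eigenpair_of_real:
  "kadj_eigenpair n E k (of_real \<mu>) (\<lambda>i. of_real (z i)) \<longleftrightarrow>
     (\<exists>i\<in>{1..n}. z i \<noteq> 0) \<and> (\<forall>i\<in>{1..n}. elem_sym k (nbhd n E i) z = \<mu> * z i ^ k)"
  unfolding kadj_eigenpair_def kadj_apply_eq_elem_sym elem_sym_of_real
  by (simp flip: of_real_mult of_real_power)

lemma nbhd_subset: "nbhd n E i \<subseteq> {1..n}"
  by (auto simp: nbhd_def)

lemma finite_nbhd [simp]: "finite (nbhd n E i)"
  using finite_subset[OF nbhd_subset] by blast

lemma le_pow2_if_dominant_coordinate:
  fixes y :: "nat \<Rightarrow> 'a::real_normed_field"
  assumes "i \<in> {1..n}" "y i \<noteq> 0" "\<And>j. j \<in> {1..n} \<Longrightarrow> norm (y j) \<le> norm (y i)"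
    and "c * norm (y i) ^ k \<le> norm (elem_sym k (nbhd n E i) y)"
  shows "c \<le> 2 ^ n"
proof -
  have "card (nbhd n E i) \<le> n"
    using card_mono[OF finite_atLeastAtMost nbhd_subset] by simp
  then have "card (nbhd n E i) choose k \<le> 2 ^ n"
    by (meson binomial_le_pow2 le_trans one_le_numeral power_increasing)
  then have "real (card (nbhd n E i) choose k) \<le> 2 ^ n"
    by (metis of_nat_le_iff of_nat_numeral of_nat_power)
  moreover have "norm (elem_sym k (nbhd n E i) y) \<le> real (card (nbhd n E i) choose k) * norm (y i) ^ k"
    using assms(3) by (intro norm_elem_sym_le) (auto simp: nbhd_def)
  ultimately have "c * norm (y i) ^ k \<le> 2 ^ n * norm (y i) ^ k"
    using assms(4) by (meson mult_right_mono norm_ge_zero order_trans zero_le_power)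
  then show ?thesis
    using assms(2) by simp
qed

lemma norm_eigenvalue_le_pow2:
  assumes "kadj_eigenpair n E k lam x"
  shows "cmod lam \<le> 2 ^ n"
proof -
  have "{1..n} \<noteq> {}"
    using assms by (auto simp: kadj_eigenpair_def)
  then have "Max ((\<lambda>j. cmod (x j)) ` {1..n}) \<in> (\<lambda>j. cmod (x j)) ` {1..n}"
    by (intro Max_in) auto
  then obtain i where i: "i \<in> {1..n}" "Max ((\<lambda>j. cmod (x j)) ` {1..n}) = cmod (x i)"
    by auto
  then have max: "\<And>j. j \<in> {1..n} \<Longrightarrow> cmod (x j) \<le> cmod (x i)"
    by (metis Max_ge finite_atLeastAtMost finite_imageI image_eqI)
  moreover have "x i \<noteq> 0"
    using assms max by (force simp: kadj_eigenpair_def)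
  moreover have "cmod lam * cmod (x i) ^ k \<le> cmod (elem_sym k (nbhd n E i) x)"
    using assms i by (simp add: kadj_eigenpair_def kadj_apply_eq_elem_sym norm_mult norm_power)
  ultimately show ?thesis
    using le_pow2_if_dominant_coordinate[OF i(1)] by blast
qed

lemma norm_eigenvalue_le_rho_k:
  assumes "kadj_eigenpair n E k lam x"
  shows "cmod lam \<le> rho_k n E k"
  unfolding rho_k_def
proof (rule cSup_upper)
  show "cmod lam \<in> {cmod lam |lam. kadj_eigenvalue n E k lam}"
    using assms by (auto simp: kadj_eigenvalue_def)
  show "bdd_above {cmod lam |lam. kadj_eigenvalue n E k lam}"
    by (rule bdd_aboveI[of _ "2 ^ n"]) (auto simp: kadj_eigenvalue_def intro: norm_eigenvalue_le_pow2)
qed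

lemma min_deg_ge_supp:
  assumes "kadj_eigenpair n E k lam x" "lam \<noteq> 0"
  shows "min_deg_ge n E k (supp n x)"
  unfolding min_deg_ge_def
proof (intro conjI ballI)
  show "supp n x \<subseteq> {1..n}"
    by (auto simp: supp_def)
  fix i assume i: "i \<in> supp n x"
  then have "elem_sym k (nbhd n E i) x \<noteq> 0"
    using assms by (auto simp: supp_def kadj_eigenpair_def kadj_apply_eq_elem_sym)
  then obtain T where T: "T \<subseteq> nbhd n E i" "card T = k" "\<forall>j\<in>T. x j \<noteq> 0"
    using elem_sym_nonzero_imp_subset[OF finite_nbhd] by blast
  then have "T \<subseteq> nbhd n E i \<inter> supp n x"
    using nbhd_subset by (fastforce simp: supp_def)
  then have "card T \<le> card (nbhd n E i \<inter> supp n x)"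
    by (intro card_mono) auto
  then show "k \<le> card (nbhd n E i \<inter> supp n x)"
    using T(2) by simp
qed

lemma kadj_eigenpair_extend_by_zero:
  assumes "1 \<le> k" "D \<subseteq> {1..n}" "\<And>v. v \<in> {1..n} - D \<Longrightarrow> card (nbhd n E v \<inter> D) < k"
    and "d \<in> D" "z d \<noteq> 0" "\<And>j. j \<notin> D \<Longrightarrow> z j = 0"
    and "\<And>i. i \<in> D \<Longrightarrow> elem_sym k (nbhd n E i) z = \<mu> * z i ^ k"
  shows "kadj_eigenpair n E k (of_real \<mu>) (\<lambda>i. of_real (z i))"
  unfolding kadj_eigenpair_of_real
proof (intro conjI ballI)
  show "\<exists>i\<in>{1..n}. z i \<noteq> 0"
    using assms(2,4,5) by blast
  fix i assume i: "i \<in> {1..n}"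
  show "elem_sym k (nbhd n E i) z = \<mu> * z i ^ k"
  proof (cases "i \<in> D")
    case False
    then have "elem_sym k (nbhd n E i) z = 0"
      using assms(3,6) i by (intro elem_sym_eq_0) auto
    then show ?thesis
      using False assms(1,6) by simp
  qed (use assms(7) in simp)
qed

section \<open>The k-core and connectivity\<close>

lemma subset_k_core_vertices: "min_deg_ge n E k W \<Longrightarrow> W \<subseteq> k_core_vertices n E k"
  unfolding k_core_vertices_def by auto

lemma min_deg_ge_k_core_vertices: "min_deg_ge n E k (k_core_vertices n E k)"
  unfolding min_deg_ge_def
proof (intro conjI ballI)
  show "k_core_vertices n E k \<subseteq> {1..n}"
    by (auto simp: k_core_vertices_def min_deg_ge_def)
  fix v assume "v \<in> k_core_vertices n E k"
  then obtain W where W: "min_deg_ge n E k W" "v \<in> W"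
    unfolding k_core_vertices_def by auto
  then have "k \<le> card (nbhd n E v \<inter> W)"
    by (auto simp: min_deg_ge_def)
  also have "\<dots> \<le> card (nbhd n E v \<inter> k_core_vertices n E k)"
    using subset_k_core_vertices[OF W(1)] by (intro card_mono) auto
  finally show "k \<le> card (nbhd n E v \<inter> k_core_vertices n E k)" .
qed

lemma card_nbhd_k_core_vertices_less:
  assumes "v \<in> {1..n}" "v \<notin> k_core_vertices n E k"
  shows "card (nbhd n E v \<inter> k_core_vertices n E k) < k"
proof (rule ccontr)
  let ?C = "k_core_vertices n E k"
  assume many: "\<not> ?thesis"
  have "min_deg_ge n E k (insert v ?C)"
    unfolding min_deg_ge_def
  proof (intro conjI ballI)
    show "insert v ?C \<subseteq> {1..n}"
      using assms(1) min_deg_ge_k_core_vertices[of n E k] by (auto simp: min_deg_ge_def)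
    fix u assume "u \<in> insert v ?C"
    then have "k \<le> card (nbhd n E u \<inter> ?C)"
      using many min_deg_ge_k_core_vertices[of n E k] by (auto simp: min_deg_ge_def)
    also have "\<dots> \<le> card (nbhd n E u \<inter> insert v ?C)"
      by (intro card_mono) auto
    finally show "k \<le> card (nbhd n E u \<inter> insert v ?C)" .
  qed
  with assms(2) show False
    using subset_k_core_vertices by blast
qed

lemma induced_connected_subset_closed:
  assumes "induced_connected E D" "a \<in> D" "a \<in> Q"
    and "\<And>u v. u \<in> D \<Longrightarrow> u \<in> Q \<Longrightarrow> v \<in> D \<Longrightarrow> E u v \<Longrightarrow> v \<in> Q"
  shows "D \<subseteq> Q"
proof
  fix v assume "v \<in> D"
  with assms(1,2) have "(\<lambda>a b. a \<in> D \<and> b \<in> D \<and> E a b)\<^sup>*\<^sup>* a v"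
    by (simp add: induced_connected_def)
  then show "v \<in> Q"
    by (induction rule: rtranclp_induct) (use assms(3,4) in auto)
qed

lemma induced_connected_edge_between:
  assumes "induced_connected E D" "P \<subseteq> D" "P \<noteq> {}" "D - P \<noteq> {}"
  shows "\<exists>u\<in>D - P. \<exists>v\<in>P. E u v"
proof -
  obtain a where "a \<in> D - P"
    using assms(4) by blast
  moreover have "\<not> D \<subseteq> D - P"
    using assms(2,3) by blast
  ultimately show ?thesis
    using induced_connected_subset_closed[OF assms(1), of a "D - P"] by blast
qed

lemma induced_connected_descent:
  assumes "induced_connected E D" "S \<subseteq> D" "S \<noteq> {}"
  obtains d :: "nat \<Rightarrow> nat"
  where "\<And>v. v \<in> S \<Longrightarrow> d v = 0" "\<And>v. v \<in> D - S \<Longrightarrow> \<exists>u\<in>D. E v u \<and> d u < d v"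
proof -
  let ?R = "\<lambda>a b. a \<in> D \<and> b \<in> D \<and> E a b"
  define d where "d v = (LEAST m. \<exists>s\<in>S. (?R ^^ m) v s)" for v
  obtain s0 where "s0 \<in> S"
    using assms(3) by blast
  have reach: "\<exists>m. \<exists>s\<in>S. (?R ^^ m) v s" if "v \<in> D" for v
  proof -
    have "?R\<^sup>*\<^sup>* v s0"
      using assms(1,2) \<open>s0 \<in> S\<close> that by (auto simp: induced_connected_def)
    then show ?thesis
      using \<open>s0 \<in> S\<close> by (auto simp: rtranclp_power)
  qed
  have "d v = 0" if "v \<in> S" for v
    unfolding d_def using that by (intro Least_eq_0) auto
  moreover have "\<exists>u\<in>D. E v u \<and> d u < d v" if v: "v \<in> D - S" for v
  proof -
    obtain s where s: "s \<in> S" "(?R ^^ d v) v s"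
      unfolding d_def using LeastI_ex[OF reach] v by blast
    then obtain m where m: "d v = Suc m"
      using v by (cases "d v") auto
    with s(2) have "(?R ^^ Suc m) v s"
      by simp
    then obtain u where u: "?R v u" "(?R ^^ m) u s"
      by (blast dest: relpowp_Suc_D2)
    then have "d u \<le> m"
      unfolding d_def using s(1) by (intro Least_le) blast
    with u m show ?thesis
      by auto
  qed
  ultimately show ?thesis
    by (rule that)
qed

definition component :: "(nat \<Rightarrow> nat \<Rightarrow> bool) \<Rightarrow> nat set \<Rightarrow> nat \<Rightarrow> nat set" where
  "component E C u = {v. (\<lambda>a b. a \<in> C \<and> b \<in> C \<and> E a b)\<^sup>*\<^sup>* u v}"

lemma component_subset:
  assumes "u \<in> C"
  shows "component E C u \<subseteq> C"
proof
  fix v assume "v \<in> component E C u"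
  then have "(\<lambda>a b. a \<in> C \<and> b \<in> C \<and> E a b)\<^sup>*\<^sup>* u v"
    by (simp add: component_def)
  then show "v \<in> C"
    by (induction rule: rtranclp_induct) (use assms in auto)
qed

lemma component_closed:
  assumes "u \<in> C" "v \<in> component E C u" "w \<in> C" "E v w"
  shows "w \<in> component E C u"
  using assms component_subset[OF assms(1)]
  by (auto simp: component_def intro: rtranclp.rtrancl_into_rtrancl)

lemma induced_connected_component:
  assumes sym: "\<And>i j. E i j \<Longrightarrow> E j i" and u: "u \<in> C"
  shows "induced_connected E (component E C u)"
  unfolding induced_connected_def
proof (intro ballI)
  let ?D = "component E C u"
  let ?R = "\<lambda>a b. a \<in> ?D \<and> b \<in> ?D \<and> E a b"
  have from_u: "?R\<^sup>*\<^sup>* u v" if "v \<in> ?D" for v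
  proof -
    have "(\<lambda>a b. a \<in> C \<and> b \<in> C \<and> E a b)\<^sup>*\<^sup>* u v"
      using that by (simp add: component_def)
    then show ?thesis
    proof (induction rule: rtranclp_induct)
      case (step y z)
      then have "y \<in> ?D" "z \<in> ?D"
        by (auto simp: component_def intro: rtranclp.rtrancl_into_rtrancl)
      with step show ?case
        by (simp add: rtranclp.rtrancl_into_rtrancl)
    qed simp
  qed
  have "symp ?R"
    using sym by (auto simp: symp_def)
  fix a b assume "a \<in> ?D" "b \<in> ?D"
  then show "?R\<^sup>*\<^sup>* a b"
    using from_u sympD[OF symp_rtranclp[OF \<open>symp ?R\<close>]] by (meson rtranclp_trans)
qed

lemma min_deg_ge_k_core_component:
  assumes "u \<in> k_core_vertices n E k"
  shows "min_deg_ge n E k (component E (k_core_vertices n E k) u)"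
proof -
  let ?C = "k_core_vertices n E k"
  have "nbhd n E v \<inter> component E ?C u = nbhd n E v \<inter> ?C" if "v \<in> component E ?C u" for v
    using that component_closed[OF assms, where E = E] component_subset[OF assms, where E = E]
    by (auto simp: nbhd_def)
  moreover have "component E ?C u \<subseteq> ?C"
    by (rule component_subset[OF assms])
  ultimately show ?thesis
    using min_deg_ge_k_core_vertices[of n E k] by (auto simp: min_deg_ge_def)
qed

lemma card_nbhd_k_core_component_less:
  assumes sym: "\<And>i j. E i j \<Longrightarrow> E j i" and "1 \<le> k" and u: "u \<in> k_core_vertices n E k"
    and v: "v \<in> {1..n} - component E (k_core_vertices n E k) u"
  shows "card (nbhd n E v \<inter> component E (k_core_vertices n E k) u) < k"
proof (cases "v \<in> k_core_vertices n E k")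
  case True
  then have "nbhd n E v \<inter> component E (k_core_vertices n E k) u = {}"
    using v sym component_closed[OF u] by (auto simp: nbhd_def)
  then show ?thesis
    using assms(2) by simp
next
  case False
  have "card (nbhd n E v \<inter> component E (k_core_vertices n E k) u)
      \<le> card (nbhd n E v \<inter> k_core_vertices n E k)"
    using component_subset[OF u] by (intro card_mono) auto
  also have "\<dots> < k"
    using card_nbhd_k_core_vertices_less False v by blast
  finally show ?thesis .
qed

section \<open>Perron vectors of connected sets of minimum degree k\<close>

lemma exponent_gap:
  fixes k L a b :: nat
  assumes "1 \<le> k" "a < b" "b \<le> L"
  shows "((k + 1) ^ (L + 1) - (k + 1) ^ (L + 1 - a)) + (k - 1) * (k + 1) ^ (L + 1) + 1
    \<le> k * ((k + 1) ^ (L + 1) - (k + 1) ^ (L + 1 - b))"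
proof -
  define F where "F = (k + 1) ^ (L + 1)"
  define p where "p = (k + 1) ^ (L + 1 - b)"
  define q where "q = (k + 1) ^ (L + 1 - a)"
  have "1 \<le> p"
    by (simp add: p_def)
  have "(k + 1) * p \<le> q"
    unfolding p_def q_def power_Suc[symmetric] using assms by (intro power_increasing) auto
  moreover have "q \<le> F"
    unfolding q_def F_def by (intro power_increasing) auto
  moreover have "p \<le> q"
    using \<open>(k + 1) * p \<le> q\<close> by simp
  then have "k * p \<le> k * F"
    using \<open>q \<le> F\<close> by simp
  moreover have "F \<le> k * F"
    using assms(1) by simp
  moreover have "k * (F - p) = k * F - k * p" "(k - 1) * F = k * F - F" "(k + 1) * p = k * p + p"
    by (simp_all add: diff_mult_distrib2 diff_mult_distrib)
  ultimately show ?thesis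
    using \<open>1 \<le> p\<close> unfolding F_def[symmetric] p_def[symmetric] q_def[symmetric] by linarith
qed

(* With d the descent distance to S and L its maximum on D, e v = B - (k+1)^(L+1-d v): the gap
   between consecutive levels grows by the factor k+1, which absorbs k-1 further exponents <= B. *)
lemma induced_connected_descent_exponents:
  assumes "induced_connected E D" "S \<subseteq> D" "S \<noteq> {}" "finite D" "1 \<le> k"
  obtains e :: "nat \<Rightarrow> nat" and B :: nat
  where "\<And>v. v \<in> S \<Longrightarrow> e v = 0" "\<And>v. e v \<le> B"
    "\<And>v. v \<in> D - S \<Longrightarrow> \<exists>u\<in>D. E v u \<and> e u + (k - 1) * B + 1 \<le> k * e v"
proof -
  obtain d :: "nat \<Rightarrow> nat" where d0: "\<And>v. v \<in> S \<Longrightarrow> d v = 0"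
    and descent: "\<And>v. v \<in> D - S \<Longrightarrow> \<exists>u\<in>D. E v u \<and> d u < d v"
    using induced_connected_descent[OF assms(1-3)] by blast
  define L where "L = Max (d ` D)"
  define B where "B = (k + 1) ^ (L + 1)"
  define e where "e v = B - (k + 1) ^ (L + 1 - d v)" for v
  show ?thesis
  proof (rule that[of e B])
    show "e v = 0" if "v \<in> S" for v
      using d0 that by (simp add: e_def B_def)
    show "e v \<le> B" for v
      by (simp add: e_def)
    show "\<exists>u\<in>D. E v u \<and> e u + (k - 1) * B + 1 \<le> k * e v" if v: "v \<in> D - S" for v
    proof -
      obtain u where "u \<in> D" "E v u" "d u < d v"
        using descent v by blast
      moreover have "d v \<le> L"
        using v assms(4) by (simp add: L_def)
      ultimately show ?thesis
        unfolding e_def B_def using assms(5) exponent_gap by blast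
    qed
  qed
qed

locale connected_min_deg =
  fixes n k :: nat and E :: "nat \<Rightarrow> nat \<Rightarrow> bool" and D :: "nat set"
  assumes k_pos: "1 \<le> k"
    and min_deg: "min_deg_ge n E k D"
    and connected: "induced_connected E D"
    and nonempty: "D \<noteq> {}"
begin

lemma D_subset: "D \<subseteq> {1..n}"
  using min_deg by (simp add: min_deg_ge_def)

lemma finite_D [simp]: "finite D"
  using D_subset finite_subset by blast

lemma k_subset_through:
  assumes "i \<in> D" "u \<in> D" "E i u"
  shows "\<exists>T\<subseteq>nbhd n E i \<inter> D. card T = k \<and> u \<in> T"
proof (rule ex_subset_with_card_containing)
  show "u \<in> nbhd n E i \<inter> D"
    using assms D_subset by (auto simp: nbhd_def)
  show "k \<le> card (nbhd n E i \<inter> D)"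
    using min_deg assms(1) by (simp add: min_deg_ge_def)
qed (use k_pos in auto)

definition sub_eigenvector :: "real \<Rightarrow> (nat \<Rightarrow> real) \<Rightarrow> bool" where
  "sub_eigenvector t y \<longleftrightarrow> (\<forall>j. 0 \<le> y j) \<and> (\<forall>j. j \<notin> D \<longrightarrow> y j = 0) \<and> (\<exists>j\<in>D. y j \<noteq> 0)
     \<and> (\<forall>i\<in>D. t * y i ^ k \<le> elem_sym k (nbhd n E i) y)"

lemma sub_eigenvector_le_pow2:
  assumes "sub_eigenvector t y"
  shows "t \<le> 2 ^ n"
proof (cases "t \<le> 0")
  case False
  have y: "\<And>j. 0 \<le> y j" "\<And>j. j \<notin> D \<Longrightarrow> y j = 0" "\<exists>j\<in>D. y j \<noteq> 0"
    "\<And>i. i \<in> D \<Longrightarrow> t * y i ^ k \<le> elem_sym k (nbhd n E i) y"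
    using assms by (auto simp: sub_eigenvector_def)
  have "Max (y ` {1..n}) \<in> y ` {1..n}"
    using D_subset nonempty by (intro Max_in) auto
  then obtain i where i: "i \<in> {1..n}" "Max (y ` {1..n}) = y i"
    by auto
  then have max: "\<And>j. j \<in> {1..n} \<Longrightarrow> norm (y j) \<le> norm (y i)"
    using y(1) by (metis Max_ge abs_of_nonneg finite_atLeastAtMost finite_imageI image_eqI real_norm_def)
  have "y i \<noteq> 0"
    using y(1,3) max D_subset by (metis abs_of_nonneg antisym norm_zero real_norm_def subsetD)
  then have "i \<in> D"
    using y(2) by blast
  then have "t * norm (y i) ^ k \<le> norm (elem_sym k (nbhd n E i) y)"
    using y(1,4) by (simp add: order_trans[OF _ abs_ge_self])
  then show ?thesis
    using le_pow2_if_dominant_coordinate[of i n y t k E] i(1) \<open>y i \<noteq> 0\<close> max by blast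
qed (auto intro: order_trans[of t 0])

lemma sub_eigenvector_scale:
  assumes "sub_eigenvector t y" "0 < c"
  shows "sub_eigenvector t (\<lambda>j. c * y j)"
  unfolding sub_eigenvector_def
proof (intro conjI allI ballI impI)
  fix i assume "i \<in> D"
  then have "c ^ k * (t * y i ^ k) \<le> c ^ k * elem_sym k (nbhd n E i) y"
    using assms by (intro mult_left_mono) (auto simp: sub_eigenvector_def)
  then show "t * (c * y i) ^ k \<le> elem_sym k (nbhd n E i) (\<lambda>j. c * y j)"
    by (simp add: elem_sym_scale power_mult_distrib mult_ac)
qed (use assms in \<open>auto simp: sub_eigenvector_def\<close>)

lemma sub_eigenvector_indicator: "sub_eigenvector 1 (\<lambda>j. if j \<in> D then 1 else 0)"
  unfolding sub_eigenvector_def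
proof (intro conjI allI ballI impI)
  fix i assume "i \<in> D"
  then have "k \<le> card (nbhd n E i \<inter> D)"
    using min_deg by (simp add: min_deg_ge_def)
  then obtain T where T: "T \<subseteq> nbhd n E i \<inter> D" "card T = k"
    by (meson obtain_subset_with_card_n)
  let ?y = "\<lambda>j. if j \<in> D then 1 else 0 :: real"
  have "(\<Prod>j\<in>T. ?y j) = 1"
    using T by (intro prod.neutral) auto
  then have "1 * ?y i ^ k = (\<Prod>j\<in>T. ?y j)"
    using \<open>i \<in> D\<close> by simp
  also have "\<dots> \<le> elem_sym k (nbhd n E i) ?y"
    using T by (intro prod_le_elem_sym) auto
  finally show "1 * ?y i ^ k \<le> elem_sym k (nbhd n E i) ?y" .
qed (use nonempty in auto)

(* Normalising to sum y D = 1 makes the feasible pairs a closed subset of a box, hence compact. *)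
definition normalized_sub_eigenvectors :: "(real \<times> (nat \<Rightarrow> real)) set" where
  "normalized_sub_eigenvectors = {(t, y). 0 \<le> t \<and> sub_eigenvector t y \<and> sum y D = 1}"

lemma normalized_sub_eigenvectors_eq:
  "normalized_sub_eigenvectors =
    ({0..2 ^ n} \<times> Pi\<^sub>E UNIV (\<lambda>j. {0..if j \<in> D then 1 else 0})) \<inter> {p. sum (snd p) D = 1}
      \<inter> (\<Inter>i\<in>D. {p. fst p * snd p i ^ k \<le> elem_sym k (nbhd n E i) (snd p)})"
  (is "_ = ?K")
proof (rule set_eqI)
  fix p :: "real \<times> (nat \<Rightarrow> real)"
  obtain t y where p: "p = (t, y)"
    by fastforce
  show "p \<in> normalized_sub_eigenvectors \<longleftrightarrow> p \<in> ?K"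
  proof
    assume "p \<in> normalized_sub_eigenvectors"
    then have y: "0 \<le> t" "sub_eigenvector t y" "sum y D = 1"
      by (auto simp: normalized_sub_eigenvectors_def p)
    then have "y j \<le> 1" if "j \<in> D" for j
      using that member_le_sum[of j D y] by (auto simp: sub_eigenvector_def)
    with y sub_eigenvector_le_pow2 show "p \<in> ?K"
      by (auto simp: p sub_eigenvector_def PiE_def extensional_def)
  next
    assume p_in: "p \<in> ?K"
    then have "sum y D = 1"
      by (simp add: p)
    have "\<exists>j\<in>D. y j \<noteq> 0"
    proof (rule ccontr)
      assume "\<not> ?thesis"
      then have "sum y D = 0"
        by (intro sum.neutral) blast
      with \<open>sum y D = 1\<close> show False
        by simp
    qed
    with p_in show "p \<in> normalized_sub_eigenvectors"
      by (auto simp: p normalized_sub_eigenvectors_def sub_eigenvector_def PiE_def Pi_def split: if_splits)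
  qed
qed

lemma compact_normalized_sub_eigenvectors: "compact normalized_sub_eigenvectors"
proof -
  have coordinate: "continuous_on UNIV (\<lambda>p::real \<times> (nat \<Rightarrow> real). snd p j)" for j
    using continuous_on_product_then_coordinatewise[OF continuous_on_snd[OF continuous_on_id]] .
  have "closed {p::real \<times> (nat \<Rightarrow> real). sum (snd p) D = 1}"
    by (intro closed_Collect_eq continuous_intros coordinate)
  moreover have
    "closed {p::real \<times> (nat \<Rightarrow> real). fst p * snd p i ^ k \<le> elem_sym k (nbhd n E i) (snd p)}" for i
    by (intro closed_Collect_le continuous_intros continuous_on_elem_sym coordinate)
  moreover have "compact ({0..2 ^ n::real} \<times> Pi\<^sub>E UNIV (\<lambda>j. {0..if j \<in> D then 1 else 0::real}))"
    by (intro compact_Times compact_Icc compact_PiE_atLeastAtMost)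
  ultimately show ?thesis
    unfolding normalized_sub_eigenvectors_eq by (intro compact_Int_closed closed_INT) auto
qed

lemma sub_eigenvector_normalize:
  assumes y: "sub_eigenvector t y" and "0 \<le> t"
  shows "(t, \<lambda>j. inverse (sum y D) * y j) \<in> normalized_sub_eigenvectors"
proof -
  obtain j0 where "j0 \<in> D" "y j0 \<noteq> 0"
    using y by (auto simp: sub_eigenvector_def)
  then have "0 < sum y D"
    using y by (intro sum_pos2) (auto simp: sub_eigenvector_def order.strict_iff_order)
  then have "sub_eigenvector t (\<lambda>j. inverse (sum y D) * y j)"
    and "(\<Sum>j\<in>D. inverse (sum y D) * y j) = 1"
    using y by (auto intro!: sub_eigenvector_scale simp: sum_distrib_left[symmetric])
  with \<open>0 \<le> t\<close> show ?thesis
    by (simp add: normalized_sub_eigenvectors_def)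
qed

lemma sub_eigenvector_maximal:
  "\<exists>t y. sub_eigenvector t y \<and> (\<forall>t' y'. sub_eigenvector t' y' \<longrightarrow> t' \<le> t)"
proof -
  have "normalized_sub_eigenvectors \<noteq> {}"
    using sub_eigenvector_normalize[OF sub_eigenvector_indicator] by auto
  then obtain t y where ty: "(t, y) \<in> normalized_sub_eigenvectors"
    and max: "\<And>q. q \<in> normalized_sub_eigenvectors \<Longrightarrow> fst q \<le> t"
    using continuous_attains_sup[OF compact_normalized_sub_eigenvectors _
        continuous_on_fst[OF continuous_on_id]]
    by fastforce
  have "t' \<le> t" if "sub_eigenvector t' y'" for t' y'
  proof (cases "t' \<le> 0")
    case True
    then show ?thesis
      using ty by (auto simp: normalized_sub_eigenvectors_def)
  next
    case False
    then show ?thesis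
      using max[OF sub_eigenvector_normalize[OF that]] by simp
  qed
  with ty show ?thesis
    by (auto simp: normalized_sub_eigenvectors_def)
qed

definition perron_root :: real where
  "perron_root = Sup {t. \<exists>y. sub_eigenvector t y}"

lemma
  shows perron_root_attained: "\<exists>y. sub_eigenvector perron_root y"
    and sub_eigenvector_le_perron_root: "sub_eigenvector t y \<Longrightarrow> t \<le> perron_root"
proof -
  obtain t0 y0 where "sub_eigenvector t0 y0" and max: "\<And>t y. sub_eigenvector t y \<Longrightarrow> t \<le> t0"
    using sub_eigenvector_maximal by blast
  moreover have "perron_root = t0"
    unfolding perron_root_def using calculation by (intro cSup_eq_maximum) auto
  ultimately show "\<exists>y. sub_eigenvector perron_root y" "sub_eigenvector t y \<Longrightarrow> t \<le> perron_root"
    by auto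
qed

lemma perron_root_ge_1: "1 \<le> perron_root"
  using sub_eigenvector_indicator by (rule sub_eigenvector_le_perron_root)

lemma power_le_elem_sym_via_neighbour:
  fixes z :: "nat \<Rightarrow> real"
  assumes "i \<in> D" "u \<in> D" "E i u" "e u + (k - 1) * B + 1 \<le> k * e i" "\<And>j. e j \<le> B"
    and "\<And>j. 0 \<le> z j" "\<And>j. j \<in> D \<Longrightarrow> c * \<epsilon> ^ e j \<le> z j"
    and "0 \<le> t" "0 < \<epsilon>" "\<epsilon> \<le> 1" "0 \<le> c" "t * \<epsilon> \<le> c ^ k"
  shows "t * (\<epsilon> ^ e i) ^ k \<le> elem_sym k (nbhd n E i) z"
proof -
  obtain T where T: "T \<subseteq> nbhd n E i \<inter> D" "card T = k" "u \<in> T"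
    using k_subset_through[OF assms(1-3)] by blast
  have "finite T"
    using T(1) finite_subset by fastforce
  then have "sum e T \<le> e u + (k - 1) * B"
    using sum_bounded_above[of "T - {u}" e B] T(2,3) assms(5) by (simp add: sum.remove)
  then have exponent: "sum e T + 1 \<le> k * e i"
    using assms(4) by linarith
  have "t * (\<epsilon> ^ e i) ^ k = t * \<epsilon> ^ (k * e i)"
    by (simp add: power_mult[symmetric] mult.commute)
  also have "\<dots> \<le> t * \<epsilon> ^ (sum e T + 1)"
    using assms(8-10) exponent by (intro mult_left_mono power_decreasing) auto
  also have "\<dots> = (t * \<epsilon>) * \<epsilon> ^ sum e T"
    by (simp add: mult_ac)
  also have "\<dots> \<le> c ^ k * \<epsilon> ^ sum e T"
    using assms(9,12) by (intro mult_right_mono) auto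
  also have "\<dots> \<le> elem_sym k (nbhd n E i) z"
    using T assms(6,7,9,11) by (intro power_sum_le_elem_sym) auto
  finally show ?thesis .
qed

lemma sub_eigenvector_positive:
  assumes y: "sub_eigenvector t y" and "0 < t"
  shows "\<exists>z. sub_eigenvector t z \<and> (\<forall>j\<in>D. 0 < z j)"
proof -
  have y0: "\<And>j. 0 \<le> y j" and yD: "\<And>j. j \<notin> D \<Longrightarrow> y j = 0"
    and y_sub: "\<And>i. i \<in> D \<Longrightarrow> t * y i ^ k \<le> elem_sym k (nbhd n E i) y"
    using y by (auto simp: sub_eigenvector_def)
  define S where "S = {j\<in>D. y j \<noteq> 0}"
  have S: "S \<subseteq> D" "S \<noteq> {}"
    using y by (auto simp: S_def sub_eigenvector_def)
  obtain e :: "nat \<Rightarrow> nat" and B where e0: "\<And>v. v \<in> S \<Longrightarrow> e v = 0" and e_le: "\<And>v. e v \<le> B"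
    and e_gap: "\<And>v. v \<in> D - S \<Longrightarrow> \<exists>u\<in>D. E v u \<and> e u + (k - 1) * B + 1 \<le> k * e v"
    using induced_connected_descent_exponents[OF connected S finite_D k_pos] by blast
  have "finite S" "\<forall>j\<in>S. 0 < y j"
    using finite_subset[OF S(1) finite_D] y0 by (auto simp: S_def order.strict_iff_order)
  from finite_ex_lower_bound_pos[OF this]
  obtain c :: real where "0 < c" and c_le: "c \<le> 1" "\<And>j. j \<in> S \<Longrightarrow> c \<le> y j"
    by blast
  define \<epsilon> where "\<epsilon> = min 1 (c ^ k / t)"
  have \<epsilon>: "0 < \<epsilon>" "\<epsilon> \<le> 1" "t * \<epsilon> \<le> c ^ k"
    using \<open>0 < c\<close> \<open>0 < t\<close> by (auto simp: \<epsilon>_def min_def field_simps)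
  define z where "z j = (if j \<in> S then y j else if j \<in> D then \<epsilon> ^ e j else 0)" for j
  have y_le_z: "y j \<le> z j" and z0: "0 \<le> z j" and zD: "j \<notin> D \<Longrightarrow> z j = 0" for j
    using y0[of j] yD[of j] \<epsilon> S(1) by (auto simp: z_def S_def)
  have z_pos: "0 < z j" if "j \<in> D" for j
  proof (cases "j \<in> S")
    case True
    then show ?thesis
      using y0[of j] by (simp add: z_def S_def order.strict_iff_order)
  qed (use that \<epsilon>(1) in \<open>simp add: z_def\<close>)
  have z_lower: "c * \<epsilon> ^ e j \<le> z j" if "j \<in> D" for j
    using that c_le \<epsilon> e0 by (auto simp: z_def mult_left_le_one_le)
  have "t * z i ^ k \<le> elem_sym k (nbhd n E i) z" if i: "i \<in> D" for i
  proof (cases "i \<in> S")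
    case True
    then have "t * z i ^ k = t * y i ^ k"
      by (simp add: z_def)
    also have "\<dots> \<le> elem_sym k (nbhd n E i) y"
      using y_sub[OF i] .
    also have "\<dots> \<le> elem_sym k (nbhd n E i) z"
      using y0 y_le_z by (intro elem_sym_mono)
    finally show ?thesis .
  next
    case False
    then obtain u where u: "u \<in> D" "E i u" "e u + (k - 1) * B + 1 \<le> k * e i"
      using e_gap i by blast
    have "z i = \<epsilon> ^ e i"
      using False i by (simp add: z_def)
    moreover have "t * (\<epsilon> ^ e i) ^ k \<le> elem_sym k (nbhd n E i) z"
      using \<epsilon> \<open>0 < t\<close> \<open>0 < c\<close>
      by (intro power_le_elem_sym_via_neighbour[OF i u e_le z0 z_lower]) auto
    ultimately show ?thesis
      by simp
  qed
  moreover have "\<exists>j\<in>D. z j \<noteq> 0"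
    using nonempty z_pos by force
  ultimately have "sub_eigenvector t z"
    using z0 zD by (simp add: sub_eigenvector_def)
  with z_pos show ?thesis
    by blast
qed

definition strict_set :: "real \<Rightarrow> (nat \<Rightarrow> real) \<Rightarrow> nat set" where
  "strict_set t z = {i\<in>D. t * z i ^ k < elem_sym k (nbhd n E i) z}"

lemma elem_sym_bump_mono:
  assumes "sub_eigenvector t z" "0 \<le> \<delta>"
  shows "elem_sym k (nbhd n E l) z \<le> elem_sym k (nbhd n E l) (z(i := z i + \<delta>))"
  using assms by (intro elem_sym_mono) (auto simp: sub_eigenvector_def)

lemma sub_eigenvector_bump:
  assumes z: "sub_eigenvector t z" and i: "i \<in> D" and "0 < \<delta>"
    and bump: "t * (z i + \<delta>) ^ k < elem_sym k (nbhd n E i) z"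
  shows "sub_eigenvector t (z(i := z i + \<delta>))"
  unfolding sub_eigenvector_def
proof (intro conjI allI impI ballI)
  let ?w = "z(i := z i + \<delta>)"
  have z0: "\<And>l. 0 \<le> z l"
    using z by (simp add: sub_eigenvector_def)
  show "0 \<le> ?w l" for l
    using z0[of l] z0[of i] \<open>0 < \<delta>\<close> by simp
  show "?w l = 0" if "l \<notin> D" for l
    using that i z by (auto simp: sub_eigenvector_def)
  show "\<exists>l\<in>D. ?w l \<noteq> 0"
    using i z0[of i] \<open>0 < \<delta>\<close> by (intro bexI[of _ i]) auto
  show "t * ?w l ^ k \<le> elem_sym k (nbhd n E l) ?w" if "l \<in> D" for l
  proof (cases "l = i")
    case True
    then show ?thesis
      using bump elem_sym_bump_mono[OF z, of \<delta> i i] \<open>0 < \<delta>\<close> by simp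
  next
    case False
    then show ?thesis
      using z that elem_sym_bump_mono[OF z, of \<delta> l i] \<open>0 < \<delta>\<close>
      by (force simp: sub_eigenvector_def)
  qed
qed

lemma strict_set_bump:
  assumes z: "sub_eigenvector t z" "\<forall>j\<in>D. 0 < z j" and i: "i \<in> D" and "0 < \<delta>"
    and bump: "t * (z i + \<delta>) ^ k < elem_sym k (nbhd n E i) z"
  shows "insert i (strict_set t z) \<union> {j\<in>D. E j i} \<subseteq> strict_set t (z(i := z i + \<delta>))"
proof
  let ?w = "z(i := z i + \<delta>)"
  have z0: "\<And>l. 0 \<le> z l" and z_sub: "\<And>l. l \<in> D \<Longrightarrow> t * z l ^ k \<le> elem_sym k (nbhd n E l) z"
    using z by (auto simp: sub_eigenvector_def)
  have mono: "elem_sym k (nbhd n E l) z \<le> elem_sym k (nbhd n E l) ?w" for l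
    using elem_sym_bump_mono[OF z(1)] \<open>0 < \<delta>\<close> by simp
  have neighbour: "elem_sym k (nbhd n E j) z < elem_sym k (nbhd n E j) ?w" if j: "j \<in> D" "E j i" for j
  proof -
    obtain T where T: "T \<subseteq> nbhd n E j \<inter> D" "card T = k" "i \<in> T"
      using k_subset_through[OF j(1) i j(2)] by blast
    show ?thesis
    proof (rule elem_sym_strict_mono[where T = T and u = i])
      show "\<And>l. l \<in> T \<Longrightarrow> 0 < ?w l"
        using T(1) z(2) \<open>0 < \<delta>\<close> by (auto intro: add_pos_pos)
    qed (use T z0 \<open>0 < \<delta>\<close> in auto)
  qed
  fix l assume l: "l \<in> insert i (strict_set t z) \<union> {j\<in>D. E j i}"
  show "l \<in> strict_set t ?w"
  proof (cases "l = i")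
    case True
    then show ?thesis
      using i bump mono[of i] by (simp add: strict_set_def)
  next
    case False
    then have "l \<in> D" "t * z l ^ k < elem_sym k (nbhd n E l) ?w"
      using l z_sub neighbour mono[of l] by (auto simp: strict_set_def intro: less_le_trans le_less_trans)
    with False show ?thesis
      by (simp add: strict_set_def)
  qed
qed

lemma strict_set_grow:
  assumes z: "sub_eigenvector t z" "\<forall>j\<in>D. 0 < z j"
    and P: "strict_set t z \<noteq> {}" "strict_set t z \<noteq> D"
  shows "\<exists>w. sub_eigenvector t w \<and> (\<forall>j\<in>D. 0 < w j) \<and> card (strict_set t z) < card (strict_set t w)"
proof -
  let ?P = "strict_set t z"
  have PD: "?P \<subseteq> D"
    by (auto simp: strict_set_def)
  obtain j i where ji: "j \<in> D - ?P" "i \<in> ?P" "E j i"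
    using induced_connected_edge_between[OF connected PD P(1)] P(2) PD by blast
  then have "t * z i ^ k < elem_sym k (nbhd n E i) z"
    by (simp add: strict_set_def)
  then obtain \<delta> where \<delta>: "0 < \<delta>" "t * (z i + \<delta>) ^ k < elem_sym k (nbhd n E i) z"
    using ex_increment_power_less by blast
  let ?w = "z(i := z i + \<delta>)"
  have "i \<in> D"
    using ji(2) PD by blast
  have "insert j ?P \<subseteq> strict_set t ?w"
    using strict_set_bump[OF z \<open>i \<in> D\<close> \<delta>] ji by blast
  then have "card (insert j ?P) \<le> card (strict_set t ?w)"
    by (intro card_mono) (auto simp: strict_set_def)
  moreover have "card (insert j ?P) = Suc (card ?P)"
    using ji(1) finite_subset[OF PD] by (intro card_insert_disjoint) auto
  moreover have "\<forall>l\<in>D. 0 < ?w l"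
    using z(2) \<delta>(1) by (auto intro: add_pos_pos)
  ultimately show ?thesis
    using sub_eigenvector_bump[OF z(1) \<open>i \<in> D\<close> \<delta>] by fastforce
qed

lemma strict_set_ne_D:
  assumes "sub_eigenvector perron_root z" "\<forall>j\<in>D. 0 < z j"
  shows "strict_set perron_root z \<noteq> D"
proof
  assume all: "strict_set perron_root z = D"
  define t where "t = Min ((\<lambda>i. elem_sym k (nbhd n E i) z / z i ^ k) ` D)"
  have "perron_root < t"
    unfolding t_def using all nonempty assms(2)
    by (subst Min_gr_iff) (auto simp: strict_set_def field_simps)
  moreover have "sub_eigenvector t z"
    unfolding sub_eigenvector_def
  proof (intro conjI ballI)
    fix i assume "i \<in> D"
    then have "t \<le> elem_sym k (nbhd n E i) z / z i ^ k"
      unfolding t_def by (intro Min_le) auto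
    then show "t * z i ^ k \<le> elem_sym k (nbhd n E i) z"
      using assms(2) \<open>i \<in> D\<close> by (simp add: field_simps)
  qed (use assms(1) in \<open>auto simp: sub_eigenvector_def\<close>)
  ultimately show False
    using sub_eigenvector_le_perron_root by fastforce
qed

lemma perron_eigenvector:
  "\<exists>z. (\<forall>j. j \<notin> D \<longrightarrow> z j = 0) \<and> (\<forall>j\<in>D. 0 < z j)
     \<and> (\<forall>i\<in>D. elem_sym k (nbhd n E i) z = perron_root * z i ^ k)"
proof -
  let ?positive = "\<lambda>z. sub_eigenvector perron_root z \<and> (\<forall>j\<in>D. 0 < z j)"
  obtain z0 where "?positive z0"
    using perron_root_attained sub_eigenvector_positive perron_root_ge_1 by fastforce
  moreover have "card (strict_set perron_root z) < Suc (card D)" for z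
    using card_mono[of D "strict_set perron_root z"] by (auto simp: strict_set_def)
  ultimately obtain z where z: "?positive z"
    and max: "\<And>w. ?positive w \<Longrightarrow> card (strict_set perron_root w) \<le> card (strict_set perron_root z)"
    using ex_has_greatest_nat[of ?positive z0 "\<lambda>z. card (strict_set perron_root z)" "Suc (card D)"]
    by blast
  have "strict_set perron_root z = {}"
  proof (rule ccontr)
    assume "strict_set perron_root z \<noteq> {}"
    then show False
      using strict_set_grow[of perron_root z] strict_set_ne_D[of z] z max by fastforce
  qed
  have "elem_sym k (nbhd n E i) z = perron_root * z i ^ k" if "i \<in> D" for i
  proof -
    have "perron_root * z i ^ k \<le> elem_sym k (nbhd n E i) z"
      using z that by (simp add: sub_eigenvector_def)
    moreover have "i \<notin> strict_set perron_root z"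
      using \<open>strict_set perron_root z = {}\<close> by blast
    ultimately show ?thesis
      using that by (simp add: strict_set_def)
  qed
  then show ?thesis
    using z by (auto simp: sub_eigenvector_def)
qed

lemma perron_root_le_rho_k:
  assumes "\<And>v. v \<in> {1..n} - D \<Longrightarrow> card (nbhd n E v \<inter> D) < k"
  shows "perron_root \<le> rho_k n E k"
proof -
  obtain z where z: "\<forall>j. j \<notin> D \<longrightarrow> z j = 0" "\<forall>j\<in>D. 0 < z j"
    "\<forall>i\<in>D. elem_sym k (nbhd n E i) z = perron_root * z i ^ k"
    using perron_eigenvector by blast
  obtain d where "d \<in> D"
    using nonempty by blast
  have "kadj_eigenpair n E k (of_real perron_root) (\<lambda>i. of_real (z i))"
    using z \<open>d \<in> D\<close> by (intro kadj_eigenpair_extend_by_zero[OF k_pos D_subset assms]) auto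
  then show ?thesis
    using norm_eigenvalue_le_rho_k perron_root_ge_1 by fastforce
qed

lemma eq_at_neighbour_if_elem_sym_eq:
  fixes x w :: "nat \<Rightarrow> real"
  assumes "\<forall>j\<in>{1..n}. 0 \<le> x j \<and> x j \<le> w j" "\<forall>j\<in>D. 0 < w j"
    and "a \<in> D" "b \<in> D" "E a b"
    and "elem_sym k (nbhd n E a) x = elem_sym k (nbhd n E a) w"
  shows "x b = w b"
proof (rule ccontr)
  assume "x b \<noteq> w b"
  then have "x b < w b"
    using assms(1,4) D_subset by force
  obtain T where T: "T \<subseteq> nbhd n E a \<inter> D" "card T = k" "b \<in> T"
    using k_subset_through[OF assms(3-5)] by blast
  have "elem_sym k (nbhd n E a) x < elem_sym k (nbhd n E a) w"
  proof (rule elem_sym_strict_mono[where T = T and u = b])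
    show "\<And>j. j \<in> T \<Longrightarrow> 0 < w j"
      using T(1) assms(2) by blast
  qed (use T assms(1) \<open>x b < w b\<close> in \<open>auto simp: nbhd_def\<close>)
  with assms(6) show False
    by simp
qed

lemma dominated_eigenvector_eq:
  fixes x w :: "nat \<Rightarrow> real"
  assumes w: "\<forall>j\<in>D. 0 < w j" "\<forall>i\<in>D. elem_sym k (nbhd n E i) w = \<mu> * w i ^ k"
    and x: "\<forall>j\<in>{1..n}. 0 \<le> x j \<and> x j \<le> w j" "\<forall>i\<in>D. elem_sym k (nbhd n E i) x = \<rho> * x i ^ k"
    and "\<mu> \<le> \<rho>" and contact: "i0 \<in> D" "x i0 = w i0"
  shows "\<forall>j\<in>D. x j = w j"
proof -
  have "\<rho> * x i0 ^ k = elem_sym k (nbhd n E i0) x"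
    using x(2) contact(1) by simp
  also have "\<dots> \<le> elem_sym k (nbhd n E i0) w"
    using x(1) by (intro elem_sym_mono) (auto simp: nbhd_def)
  also have "\<dots> = \<mu> * x i0 ^ k"
    using w(2) contact by simp
  finally have "\<rho> = \<mu>"
    using \<open>\<mu> \<le> \<rho>\<close> contact w(1) by simp
  have "D \<subseteq> {j. x j = w j}"
  proof (rule induced_connected_subset_closed[OF connected contact(1)])
    show "i0 \<in> {j. x j = w j}"
      using contact(2) by simp
    fix a b assume "a \<in> D" "a \<in> {j. x j = w j}" "b \<in> D" "E a b"
    then show "b \<in> {j. x j = w j}"
      using eq_at_neighbour_if_elem_sym_eq[of x w a b] x w \<open>\<rho> = \<mu>\<close> by simp
  qed
  then show ?thesis
    by blast
qed

lemma nonneg_eigenvector_positive: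
  fixes u x :: "nat \<Rightarrow> real"
  assumes u: "\<forall>j\<in>D. 0 < u j" "\<forall>j. j \<notin> D \<longrightarrow> u j = 0"
      "\<forall>i\<in>D. elem_sym k (nbhd n E i) u = \<mu> * u i ^ k"
    and x: "\<forall>j\<in>{1..n}. 0 \<le> x j" "\<forall>j\<in>{1..n} - D. x j = 0" "\<exists>j\<in>D. x j \<noteq> 0"
      "\<forall>i\<in>D. elem_sym k (nbhd n E i) x = \<rho> * x i ^ k"
    and "\<mu> \<le> \<rho>"
  shows "\<forall>j\<in>D. 0 < x j"
proof -
  \<comment> \<open>c u is the least multiple of u lying above x.\<close>
  define c where "c = Max ((\<lambda>j. x j / u j) ` D)"
  have "c \<in> (\<lambda>j. x j / u j) ` D"
    unfolding c_def using nonempty by (intro Max_in) auto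
  then obtain i0 where i0: "i0 \<in> D" "c = x i0 / u i0"
    by blast
  have x_le: "x j \<le> c * u j" if "j \<in> {1..n}" for j
  proof (cases "j \<in> D")
    case True
    then have "x j / u j \<le> c"
      unfolding c_def by (intro Max_ge) auto
    then show ?thesis
      using True u(1) by (simp add: field_simps)
  qed (use that x(2) u(2) in simp)
  obtain j1 where j1: "j1 \<in> D" "x j1 \<noteq> 0"
    using x(3) by blast
  then have "0 < x j1 / u j1"
    using x(1) u(1) D_subset by (auto simp: order.strict_iff_order)
  also have "\<dots> \<le> c"
    unfolding c_def using j1(1) by (intro Max_ge) auto
  finally have "0 < c" .
  have "\<forall>j\<in>D. x j = c * u j"
  proof (rule dominated_eigenvector_eq[OF _ _ _ x(4) \<open>\<mu> \<le> \<rho>\<close> i0(1)])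
    show "\<forall>j\<in>D. 0 < c * u j"
      using u(1) \<open>0 < c\<close> by simp
    show "\<forall>i\<in>D. elem_sym k (nbhd n E i) (\<lambda>j. c * u j) = \<mu> * (c * u i) ^ k"
      using u(3) by (simp add: elem_sym_scale power_mult_distrib mult_ac)
    show "\<forall>j\<in>{1..n}. 0 \<le> x j \<and> x j \<le> c * u j"
      using x(1) x_le by blast
    show "x i0 = c * u i0"
      using i0 u(1)[rule_format, OF i0(1)] by simp
  qed
  then show ?thesis
    using u(1) \<open>0 < c\<close> by simp
qed

end

lemma one_le_rho_k:
  assumes sym: "\<And>i j. E i j \<Longrightarrow> E j i" and "1 \<le> k" and "k_core_vertices n E k \<noteq> {}"
  shows "1 \<le> rho_k n E k"
proof -
  obtain u where u: "u \<in> k_core_vertices n E k"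
    using assms(3) by blast
  let ?D = "component E (k_core_vertices n E k) u"
  interpret connected_min_deg n k E ?D
  proof
    show "min_deg_ge n E k ?D"
      using min_deg_ge_k_core_component[OF u] .
    show "induced_connected E ?D"
      using induced_connected_component[OF sym u] .
    show "?D \<noteq> {}"
      by (auto simp: component_def)
  qed (use assms(2) in simp)
  have "perron_root \<le> rho_k n E k"
    using card_nbhd_k_core_component_less[OF sym assms(2) u] by (intro perron_root_le_rho_k)
  with perron_root_ge_1 show ?thesis
    by linarith
qed

lemma k_core_subset_supp:
  fixes x :: "nat \<Rightarrow> real"
  assumes "1 \<le> k" and connected: "induced_connected E (k_core_vertices n E k)"
    and x: "\<forall>i\<in>{1..n}. 0 \<le> x i" "supp n x \<subseteq> k_core_vertices n E k" "supp n x \<noteq> {}"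
      "\<forall>i\<in>{1..n}. elem_sym k (nbhd n E i) x = rho_k n E k * x i ^ k"
  shows "k_core_vertices n E k \<subseteq> supp n x"
proof -
  let ?C = "k_core_vertices n E k"
  interpret connected_min_deg n k E ?C
    using assms(1) connected min_deg_ge_k_core_vertices x(2,3) by unfold_locales auto
  obtain v where v: "\<forall>j. j \<notin> ?C \<longrightarrow> v j = 0" "\<forall>j\<in>?C. 0 < v j"
    "\<forall>i\<in>?C. elem_sym k (nbhd n E i) v = perron_root * v i ^ k"
    using perron_eigenvector by blast
  have "perron_root \<le> rho_k n E k"
    using card_nbhd_k_core_vertices_less by (intro perron_root_le_rho_k) auto
  moreover have "\<forall>j\<in>{1..n} - ?C. x j = 0" "\<exists>j\<in>?C. x j \<noteq> 0"
    using x(2,3) by (auto simp: supp_def)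
  moreover have "\<forall>i\<in>?C. elem_sym k (nbhd n E i) x = rho_k n E k * x i ^ k"
    using x(4) D_subset by blast
  ultimately have "\<forall>j\<in>?C. 0 < x j"
    using nonneg_eigenvector_positive[OF v(2,1,3) x(1)] by blast
  then show ?thesis
    using D_subset by (force simp: supp_def)
qed

theorem theorem3p2:
  fixes n k :: nat and E :: "nat \<Rightarrow> nat \<Rightarrow> bool" and x :: "nat \<Rightarrow> real"
  assumes "simple_graph n E"
    and "k \<ge> 1"
    and "k_core_vertices n E k \<noteq> {}"
    and "\<forall>i\<in>{1..n}. x i \<ge> 0"
    and "kadj_eigenpair n E k (complex_of_real (rho_k n E k)) (\<lambda>i. complex_of_real (x i))"
  shows "supp n x \<subseteq> k_core_vertices n E k
    \<and> (induced_connected E (k_core_vertices n E k) \<longrightarrow> supp n x = k_core_vertices n E k)"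
proof -
  have sym: "\<And>i j. E i j \<Longrightarrow> E j i"
    using assms(1) by (simp add: simple_graph_def)
  have x_eigen: "\<forall>i\<in>{1..n}. elem_sym k (nbhd n E i) x = rho_k n E k * x i ^ k"
    and "supp n x \<noteq> {}"
    using assms(5) by (auto simp: kadj_eigenpair_of_real supp_def)
  have "supp n (\<lambda>i. complex_of_real (x i)) = supp n x"
    by (simp add: supp_def)
  then have "min_deg_ge n E k (supp n x)"
    using min_deg_ge_supp[OF assms(5)] one_le_rho_k[OF sym assms(2,3)] by simp
  then have supp_core: "supp n x \<subseteq> k_core_vertices n E k"
    by (rule subset_k_core_vertices)
  moreover have "k_core_vertices n E k \<subseteq> supp n x" if "induced_connected E (k_core_vertices n E k)"
    using k_core_subset_supp[OF assms(2) that assms(4) supp_core \<open>supp n x \<noteq> {}\<close> x_eigen] .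
  ultimately show ?thesis
    by blast
qed

end
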